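(* Fix $\delta\in(0,1)$, $\beta,h\in\mathbb R$ and $\gamma>0$. For $i,j\ge0$ let $\mathcal A_{i,j}=\mathbb E[(Z^{\beta,h}_{i,j,\omega})^\delta]$ for $i,j\ge1$, with $\mathcal A_{0,0}=1$ and $\mathcal A_{i,0}=\mathcal A_{0,i}=0$ for $i\ge1$. If there exists $k\in\mathbb N$ such that $\rho_1+\rho_2+\rho_3\le1$, where, with $c_\delta:=\mathbb E[e^{\delta(\beta\omega_{1,1}+h)}]$, $$\rho_1=c_\delta\sum_{n\ge k}\sum_{m\ge k}\sum_{i=0}^{k-1}\sum_{j=0}^{k-1}K(n-i+m-j)^\delta\mathcal A_{i,j},\qquad \rho_2=c_\delta\sum_{n=1}^{k-1}\sum_{m\ge k}\sum_{i=0}^{n-1}\sum_{j=0}^{k-1}K(n-i+m-j)^\delta\mathcal A_{i,j},$$ $$\rho_3=c_\delta\sum_{n\ge k}\sum_{m=1}^{k-1}\sum_{i=0}^{k-1}\sum_{j=0}^{m-1}K(n-i+m-j)^\delta\mathcal A_{i,j},$$ then $\textsc{f}_\gamma(\beta,h)=0$.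
   Context: Let $\mathbb N=\{1,2,\dots\}$. Fix $\alpha\ge0$ and a slowly varying function $L$, and set $K(n)=L(n)n^{-(2+\alpha)}$, normalized so that $\sum_{n,m\in\mathbb N}K(n+m)=1$. Let $\tau$ be a bivariate renewal process with law $\mathbf P$: $\tau_0=(0,0)$, i.i.d. increments with $\mathbf P(\tau_1=(n,m))=K(n+m)$, $n,m\in\mathbb N$; $\tau$ is identified with the random set of its points. Let $\omega=\{\omega_{n,m}\}$ be i.i.d. real random variables with law $\mathbb P$, centered, unit variance, $\mathbb E[e^{\beta\omega_{1,1}}]<\infty$ for all $\beta$. Constrained partition function: $Z^{\beta,h}_{N,M,\omega}=\mathbf E[\exp(\sum_{n=1}^N\sum_{m=1}^M(\beta\omega_{n,m}+h)\mathbf 1_{(n,m)\in\tau})\mathbf 1_{(N,M)\in\tau}]$. For $\gamma>0$, $\textsc{f}_\gamma(\beta,h)=\lim_{N\to\infty}\frac1N\mathbb E\log Z^{\beta,h}_{N,M(N),\omega}$ for any sequence with $M(N)/N\to\gamma$ (the limit exists and does not depend on the sequence). *)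

theory Defs
  imports "HOL-Probability.Probability"
begin

definition slowly_varying :: "(real \<Rightarrow> real) \<Rightarrow> bool" where
  "slowly_varying L \<longleftrightarrow> L \<in> borel_measurable borel \<and>
     (\<forall>\<^sub>F x in at_top. L x > 0) \<and>
     (\<forall>c>0. ((\<lambda>x. L (c * x) / L x) \<longlongrightarrow> 1) at_top)"

definition Kfun :: "real \<Rightarrow> (real \<Rightarrow> real) \<Rightarrow> nat \<Rightarrow> real" where
  "Kfun \<alpha> L n = L (real n) * real n powr (-(2 + \<alpha>))"

text \<open>Finite renewal trajectories from (0,0) to (N,M): the points of tau in
  [1,N]x[1,M] when (N,M) is in tau, listed in increasing order.\<close>
definition chains :: "nat \<Rightarrow> nat \<Rightarrow> (nat \<times> nat) list set" where
  "chains N M = {ps. ps \<noteq> [] \<and> last ps = (N, M) \<and>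
      sorted_wrt (\<lambda>p q. fst p < fst q \<and> snd p < snd q) ((0, 0) # ps)}"

definition chain_prob :: "(nat \<Rightarrow> real) \<Rightarrow> (nat \<times> nat) list \<Rightarrow> real" where
  "chain_prob K ps = prod_list (map2 (\<lambda>p q. K ((fst q - fst p) + (snd q - snd p))) ((0, 0) # ps) ps)"

text \<open>Constrained partition function Z^{beta,h}_{N,M,omega}, written as the
  expectation over the renewal law (a finite sum over trajectories).\<close>
definition Zpart :: "(nat \<Rightarrow> real) \<Rightarrow> real \<Rightarrow> real \<Rightarrow> (nat \<times> nat \<Rightarrow> real) \<Rightarrow> nat \<Rightarrow> nat \<Rightarrow> real" where
  "Zpart K \<beta> h w N M = (\<Sum>ps\<in>chains N M.
      chain_prob K ps * exp (sum_list (map (\<lambda>p. \<beta> * w p + h) ps)))"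

end

(* As ln z <= z^delta / delta, it suffices to bound the fractional moments
   A_p = E[Z_p^delta] uniformly in p.  Cutting every trajectory at its first jump out of the box
   [0,k)^2 writes Z_p as a sum, over the landing point e, of the weight of reaching e from inside
   the box times the partition function of the rest of the trajectory in the environment shifted
   by e.  Subadditivity of x^delta, independence of the disjoint blocks of sites involved and
   translation invariance of the environment give the renewal inequality
   A_p <= sum_e q(e) A_(p-e), where the kernel q has total mass rho1 + rho2 + rho3 <= 1; by
   induction on p, A is bounded by its maximum over the box.

   Z_(N,M) is at least the contribution of a single trajectory, hence
   E ln Z_(N,M) >= ln P(trajectory) + h * (number of its points).  Slow variation controls L on
   [X, 2X) and, through L(2x) >= L(x)/2, at the points X 2^j.  Writing N + M = r + X (2^j1 + ...)
   with r in [X, 2X) gives a trajectory with O(log N) such jumps, each of probability at least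
   N^(-O(1)), so that ln P >= -O(log^2 N) = o(N). *)

theory Submission
  imports Defs "HOL-Real_Asymp.Real_Asymp"
begin

section \<open>Trajectories and partition functions\<close>

abbreviation sw_less :: "nat \<times> nat \<Rightarrow> nat \<times> nat \<Rightarrow> bool" where
  "sw_less p q \<equiv> fst p < fst q \<and> snd p < snd q"

lemma chains_eq:
  "chains N M = {qs @ [(N, M)] | qs. sorted_wrt sw_less ((0, 0) # qs @ [(N, M)])}"
proof -
  have "ps \<in> chains N M \<longleftrightarrow> ps \<in> {qs @ [(N, M)] | qs. sorted_wrt sw_less ((0, 0) # qs @ [(N, M)])}"
    for ps by (cases ps rule: rev_cases) (auto simp: chains_def)
  then show ?thesis by blast
qed

lemma chains_subset_grid:
  assumes "ps \<in> chains N M"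
  shows "set ps \<subseteq> {1..N} \<times> {1..M}"
proof -
  from assms obtain qs where "ps = qs @ [(N, M)]" "sorted_wrt sw_less ((0, 0) # qs @ [(N, M)])"
    by (auto simp: chains_eq)
  then show ?thesis by (fastforce simp: sorted_wrt_append)
qed

lemma chains_empty_if_zero: "N = 0 \<or> M = 0 \<Longrightarrow> chains N M = {}"
  using chains_subset_grid[of _ N M] by (force simp: chains_eq)

lemma singleton_in_chains: "0 < N \<Longrightarrow> 0 < M \<Longrightarrow> [(N, M)] \<in> chains N M"
  by (simp add: chains_def)

lemma snoc_in_chains:
  assumes "ps \<in> chains i j" "i < N" "j < M"
  shows "ps @ [(N, M)] \<in> chains N M"
proof -
  have "\<forall>x\<in>set ((0, 0) # ps). sw_less x (N, M)"
    using chains_subset_grid[OF assms(1)] assms(2,3) by fastforce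
  then show ?thesis using assms(1) by (simp add: chains_def sorted_wrt_append)
qed

lemma chains_last_step:
  assumes "0 < N" "0 < M"
  shows "chains N M = insert [(N, M)]
           (\<Union>(i, j)\<in>{1..<N} \<times> {1..<M}. (\<lambda>ps. ps @ [(N, M)]) ` chains i j)"
proof (intro equalityI subsetI)
  fix ps assume "ps \<in> chains N M"
  then obtain qs where ps: "ps = qs @ [(N, M)]"
    and sorted: "sorted_wrt sw_less ((0, 0) # qs @ [(N, M)])"
    by (auto simp: chains_eq)
  show "ps \<in> insert [(N, M)] (\<Union>(i, j)\<in>{1..<N} \<times> {1..<M}. (\<lambda>ps. ps @ [(N, M)]) ` chains i j)"
  proof (cases qs rule: rev_cases)
    case (snoc qs' q)
    obtain i j where q: "q = (i, j)" by (cases q)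
    with sorted snoc have "qs \<in> chains i j" "i \<in> {1..<N}" "j \<in> {1..<M}"
      by (auto simp: chains_def sorted_wrt_append)
    then show ?thesis using ps by blast
  qed (simp add: ps)
next
  fix ps assume "ps \<in> insert [(N, M)] (\<Union>(i, j)\<in>{1..<N} \<times> {1..<M}. (\<lambda>ps. ps @ [(N, M)]) ` chains i j)"
  then show "ps \<in> chains N M"
    using assms singleton_in_chains snoc_in_chains by auto
qed

lemma finite_chains: "finite (chains N M)"
proof (rule finite_subset)
  have "distinct ps" if "sorted_wrt sw_less ps" for ps
    using that by (induction ps) auto
  then show "chains N M \<subseteq> {xs. set xs \<subseteq> {1..N} \<times> {1..M} \<and> distinct xs}"
    using chains_subset_grid by (simp add: subset_iff chains_def)
qed (simp add: finite_subset_distinct)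

lemma map2_Cons_snoc:
  "map2 f (a # xs @ [y]) (xs @ [y]) = map2 f (a # xs) xs @ [f (last (a # xs)) y]"
  by (induction xs arbitrary: a) auto

lemma sorted_wrt_zip_Cons:
  "sorted_wrt P (a # xs) \<Longrightarrow> (x, y) \<in> set (zip (a # xs) xs) \<Longrightarrow> P x y"
  by (induction xs arbitrary: a) auto

lemma chain_prob_singleton: "chain_prob K [(N, M)] = K (N + M)"
  by (simp add: chain_prob_def)

lemma chain_prob_snoc:
  assumes "ps \<in> chains i j"
  shows "chain_prob K (ps @ [(N, M)]) = chain_prob K ps * K (N - i + (M - j))"
proof -
  obtain qs where "ps = qs @ [(i, j)]" using assms by (auto simp: chains_eq)
  then have "last ((0, 0) # ps) = (i, j)" by simp
  then show ?thesis by (simp add: chain_prob_def map2_Cons_snoc del: last.simps)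
qed

lemma chain_prob_nonneg:
  assumes "ps \<in> chains N M" and K: "\<forall>n\<ge>2. K n \<ge> 0"
  shows "chain_prob K ps \<ge> 0"
  unfolding chain_prob_def
proof (rule prod_list_nonneg)
  fix x assume "x \<in> set (map2 (\<lambda>p q. K (fst q - fst p + (snd q - snd p))) ((0, 0) # ps) ps)"
  then obtain p q where pq: "(p, q) \<in> set (zip ((0, 0) # ps) ps)"
    and x: "x = K (fst q - fst p + (snd q - snd p))" by auto
  have "sorted_wrt sw_less ((0, 0) # ps)" using assms(1) by (simp add: chains_def)
  with pq have "sw_less p q" by (rule sorted_wrt_zip_Cons[rotated])
  then have "fst q - fst p + (snd q - snd p) \<ge> 2" by linarith
  then show "0 \<le> x" unfolding x by (rule K[rule_format])
qed

lemma Zpart_last_step: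
  assumes "0 < N" "0 < M"
  shows "Zpart K \<beta> h w N M = exp (\<beta> * w (N, M) + h) *
     (K (N + M) + (\<Sum>(i, j)\<in>{1..<N} \<times> {1..<M}. Zpart K \<beta> h w i j * K (N - i + (M - j))))"
proof -
  let ?g = "\<lambda>ps. chain_prob K ps * exp (sum_list (map (\<lambda>p. \<beta> * w p + h) ps))"
  let ?snoc = "\<lambda>ps. ps @ [(N, M)]"
  let ?U = "\<Union>(i, j)\<in>{1..<N} \<times> {1..<M}. ?snoc ` chains i j"
  have "finite ?U" by (auto simp: finite_chains)
  moreover have "[(N, M)] \<notin> ?U" by (auto simp: chains_def)
  ultimately have "Zpart K \<beta> h w N M = ?g [(N, M)] + sum ?g ?U"
    unfolding Zpart_def chains_last_step[OF assms] by simp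
  also have "sum ?g ?U = (\<Sum>(i, j)\<in>{1..<N} \<times> {1..<M}. sum ?g (?snoc ` chains i j))"
    unfolding case_prod_beta
  proof (rule sum.UNION_disjoint)
    show "\<forall>p\<in>{1..<N} \<times> {1..<M}. \<forall>p'\<in>{1..<N} \<times> {1..<M}. p \<noteq> p' \<longrightarrow>
            ?snoc ` chains (fst p) (snd p) \<inter> ?snoc ` chains (fst p') (snd p') = {}"
      by (auto simp: chains_def prod_eq_iff)
  qed (auto simp: finite_chains)
  also have "\<dots> = (\<Sum>(i, j)\<in>{1..<N} \<times> {1..<M}.
                     exp (\<beta> * w (N, M) + h) * (Zpart K \<beta> h w i j * K (N - i + (M - j))))"
  proof (intro sum.cong refl, clarify)
    fix i j
    have "sum ?g (?snoc ` chains i j) = (\<Sum>ps\<in>chains i j. ?g (?snoc ps))"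
      by (rule sum.reindex_cong[where l = ?snoc]) (auto simp: inj_on_def)
    also have "\<dots> = (\<Sum>ps\<in>chains i j. exp (\<beta> * w (N, M) + h) * (?g ps * K (N - i + (M - j))))"
      by (intro sum.cong refl) (simp add: chain_prob_snoc exp_add algebra_simps)
    finally show "sum ?g (?snoc ` chains i j) =
        exp (\<beta> * w (N, M) + h) * (Zpart K \<beta> h w i j * K (N - i + (M - j)))"
      by (simp add: Zpart_def sum_distrib_left sum_distrib_right)
  qed
  finally show ?thesis
    by (simp add: chain_prob_singleton sum_distrib_left algebra_simps case_prod_beta)
qed

(* Z with the convention Z_(0,0) = 1 for the empty trajectory, matching A_(0,0) = 1. *)
definition Zpt :: "(nat \<Rightarrow> real) \<Rightarrow> real \<Rightarrow> real \<Rightarrow> (nat \<times> nat \<Rightarrow> real) \<Rightarrow> nat \<times> nat \<Rightarrow> real" where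
  "Zpt K \<beta> h w p = (if p = (0, 0) then 1 else Zpart K \<beta> h w (fst p) (snd p))"

definition below :: "nat \<times> nat \<Rightarrow> (nat \<times> nat) set" where
  "below p = {..<fst p} \<times> {..<snd p}"

abbreviation Kjump :: "(nat \<Rightarrow> real) \<Rightarrow> nat \<times> nat \<Rightarrow> nat \<times> nat \<Rightarrow> real" where
  "Kjump K q p \<equiv> K (fst p - fst q + (snd p - snd q))"

lemma finite_below [simp]: "finite (below p)"
  by (simp add: below_def)

lemma Zpt_origin [simp]: "Zpt K \<beta> h w (0, 0) = 1"
  by (simp add: Zpt_def)

lemma Zpt_axis: "fst p = 0 \<or> snd p = 0 \<Longrightarrow> p \<noteq> (0, 0) \<Longrightarrow> Zpt K \<beta> h w p = 0"
  by (auto simp: Zpt_def Zpart_def chains_empty_if_zero)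

lemma Zpt_rec:
  assumes "p \<noteq> (0, 0)"
  shows "Zpt K \<beta> h w p = exp (\<beta> * w p + h) * (\<Sum>q\<in>below p. Zpt K \<beta> h w q * Kjump K q p)"
proof (cases "fst p = 0 \<or> snd p = 0")
  case True
  then show ?thesis using assms by (auto simp: Zpt_axis below_def)
next
  case False
  obtain N M where p: "p = (N, M)" and NM: "0 < N" "0 < M" using False by (cases p) auto
  let ?f = "\<lambda>q. Zpt K \<beta> h w q * Kjump K q p"
  have "Zpt K \<beta> h w q = 0" if "q \<in> below p - insert (0, 0) ({1..<N} \<times> {1..<M})" for q
    using that by (intro Zpt_axis) (auto simp: p below_def)
  then have "sum ?f (below p) = sum ?f (insert (0, 0) ({1..<N} \<times> {1..<M}))"
    using NM by (intro sum.mono_neutral_right) (auto simp: p below_def)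
  also have "\<dots> = K (N + M) + (\<Sum>(i, j)\<in>{1..<N} \<times> {1..<M}. Zpart K \<beta> h w i j * K (N - i + (M - j)))"
    by (subst sum.insert) (auto simp: p Zpt_def case_prod_beta intro!: sum.cong)
  finally show ?thesis using Zpart_last_step[OF NM, of K \<beta> h w] NM by (simp add: Zpt_def p)
qed

lemma Zpt_nonneg:
  assumes "\<forall>n\<ge>2. K n \<ge> 0"
  shows "Zpt K \<beta> h w p \<ge> 0"
proof (induction "fst p + snd p" arbitrary: p rule: less_induct)
  case less
  show ?case
  proof (cases "p = (0, 0)")
    case False
    have "Zpt K \<beta> h w q * Kjump K q p \<ge> 0" if "q \<in> below p" for q
      using that assms less.hyps[of q] by (auto simp: below_def)
    then show ?thesis by (simp add: Zpt_rec[OF False] sum_nonneg)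
  qed simp
qed

section \<open>Decomposition at the first exit from a box\<close>

definition shift :: "nat \<times> nat \<Rightarrow> (nat \<times> nat \<Rightarrow> real) \<Rightarrow> nat \<times> nat \<Rightarrow> real" where
  "shift e w = (\<lambda>q. w (q + e))"

(* Weight of the trajectories from (0, 0) that stay in the box below (k, k) and then jump to e. *)
definition exit_weight ::
  "(nat \<Rightarrow> real) \<Rightarrow> real \<Rightarrow> real \<Rightarrow> nat \<Rightarrow> (nat \<times> nat \<Rightarrow> real) \<Rightarrow> nat \<times> nat \<Rightarrow> real" where
  "exit_weight K \<beta> h k w e =
     exp (\<beta> * w e + h) * (\<Sum>q\<in>below e \<inter> below (k, k). Zpt K \<beta> h w q * Kjump K q e)"

lemma atMost_prod_nat: "{..p} = {..fst p} \<times> {..snd p}" for p :: "nat \<times> nat"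
  by (auto simp: less_eq_prod_def)

lemma Zpt_shift_rec:
  assumes "e \<in> below p"
  shows "exp (\<beta> * w p + h) * (\<Sum>q\<in>{q\<in>below p. e \<le> q}. Zpt K \<beta> h (shift e w) (q - e) * Kjump K q p)
       = Zpt K \<beta> h (shift e w) (p - e)"
proof -
  have "p - e \<noteq> (0, 0)" and "p - e + e = p"
    using assms by (auto simp: below_def prod_eq_iff)
  moreover have "(\<Sum>q\<in>{q\<in>below p. e \<le> q}. Zpt K \<beta> h (shift e w) (q - e) * Kjump K q p)
      = (\<Sum>q\<in>below (p - e). Zpt K \<beta> h (shift e w) q * Kjump K q (p - e))"
    using assms
    by (intro sum.reindex_bij_witness[of _ "\<lambda>q. q + e" "\<lambda>q. q - e"])
       (auto simp: below_def less_eq_prod_def prod_eq_iff)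
  ultimately show ?thesis by (simp add: Zpt_rec shift_def)
qed

lemma sum_below_swap_outside_box:
  "(\<Sum>q\<in>below p - below (k, k). \<Sum>e\<in>{..q} - below (k, k). f e q)
     = (\<Sum>e\<in>below p - below (k, k). \<Sum>q\<in>{q\<in>below p. e \<le> q}. f e q)"
proof -
  have "(\<Sum>q\<in>below p - below (k, k). \<Sum>e\<in>{..q} - below (k, k). f e q)
      = (\<Sum>q\<in>below p - below (k, k). \<Sum>e\<in>{e\<in>below p - below (k, k). e \<le> q}. f e q)"
    by (intro sum.cong refl) (auto simp: below_def less_eq_prod_def)
  also have "\<dots> = (\<Sum>e\<in>below p - below (k, k). \<Sum>q\<in>{q\<in>below p - below (k, k). e \<le> q}. f e q)"
    by (rule sum.swap_restrict) auto
  also have "\<dots> = (\<Sum>e\<in>below p - below (k, k). \<Sum>q\<in>{q\<in>below p. e \<le> q}. f e q)"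
    by (intro sum.cong refl) (auto simp: below_def less_eq_prod_def)
  finally show ?thesis .
qed

lemma Zpt_exit_decomp:
  assumes "k \<ge> 1" "p \<notin> below (k, k)"
  shows "Zpt K \<beta> h w p =
     (\<Sum>e\<in>{..p} - below (k, k). exit_weight K \<beta> h k w e * Zpt K \<beta> h (shift e w) (p - e))"
  using assms(2)
proof (induction "fst p + snd p" arbitrary: p rule: less_induct)
  case less
  let ?B = "below (k, k)"
  let ?X = "exit_weight K \<beta> h k w"
  let ?Z = "\<lambda>e q. Zpt K \<beta> h (shift e w) (q - e)"
  have IH: "Zpt K \<beta> h w q = (\<Sum>e\<in>{..q} - ?B. ?X e * ?Z e q)" if "q \<in> below p - ?B" for q
    using that by (intro less.hyps) (auto simp: below_def)
  have "exp (\<beta> * w p + h) * (\<Sum>q\<in>below p - ?B. Zpt K \<beta> h w q * Kjump K q p)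
      = (\<Sum>e\<in>below p - ?B. ?X e *
           (exp (\<beta> * w p + h) * (\<Sum>q\<in>{q\<in>below p. e \<le> q}. ?Z e q * Kjump K q p)))"
    by (simp add: IH sum_distrib_left sum_distrib_right sum_below_swap_outside_box mult_ac)
  also have "\<dots> = (\<Sum>e\<in>below p - ?B. ?X e * ?Z e p)"
    by (intro sum.cong refl arg_cong2[where f = "(*)"] Zpt_shift_rec) auto
  finally have outside: "exp (\<beta> * w p + h) * (\<Sum>q\<in>below p - ?B. Zpt K \<beta> h w q * Kjump K q p)
      = (\<Sum>e\<in>below p - ?B. ?X e * ?Z e p)" .
  have p0: "p \<noteq> (0, 0)" using less.prems assms(1) by (auto simp: below_def)
  have "Zpt K \<beta> h w p = exp (\<beta> * w p + h) *
      ((\<Sum>q\<in>below p \<inter> ?B. Zpt K \<beta> h w q * Kjump K q p) + (\<Sum>q\<in>below p - ?B. Zpt K \<beta> h w q * Kjump K q p))"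
    by (simp add: Zpt_rec[OF p0] sum.Int_Diff)
  also have "\<dots> = ?X p * ?Z p p + (\<Sum>e\<in>below p - ?B. ?X e * ?Z e p)"
    by (simp add: exit_weight_def outside distrib_left zero_prod_def)
  also have "\<dots> = (\<Sum>e\<in>insert p (below p - ?B). ?X e * ?Z e p)"
    by (subst sum.insert) (auto simp: below_def)
  also have "\<dots> = (\<Sum>e\<in>{..p} - ?B. ?X e * ?Z e p)"
  proof (rule sum.mono_neutral_left)
    show "\<forall>e\<in>{..p} - ?B - insert p (below p - ?B). ?X e * ?Z e p = 0"
      by (auto intro!: Zpt_axis simp: atMost_prod_nat below_def prod_eq_iff)
  qed (use less.prems in \<open>auto simp: atMost_prod_nat below_def mem_Times_iff\<close>)
  finally show ?case .
qed

definition grid :: "nat \<times> nat \<Rightarrow> (nat \<times> nat) set" where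
  "grid p = {1..fst p} \<times> {1..snd p}"

lemma Zpt_local:
  assumes "\<And>s. s \<in> grid p \<Longrightarrow> w s = w' s"
  shows "Zpt K \<beta> h w p = Zpt K \<beta> h w' p"
proof -
  have "\<beta> * w s + h = \<beta> * w' s + h" if "ps \<in> chains (fst p) (snd p)" "s \<in> set ps" for ps s
    using that chains_subset_grid assms by (force simp: grid_def)
  then show ?thesis
    unfolding Zpt_def Zpart_def by (auto intro!: sum.cong arg_cong[where f = exp] arg_cong[where f = sum_list])
qed

lemma measurable_Zpt [measurable]:
  assumes [measurable]: "\<And>p. (\<lambda>r. V r p) \<in> borel_measurable M"
  shows "(\<lambda>r. Zpt K \<beta> h (V r) q) \<in> borel_measurable M"
proof -
  have [measurable]: "(\<lambda>r. \<Sum>p\<leftarrow>ps. \<beta> * V r p + h) \<in> borel_measurable M" for ps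
    by (induction ps) auto
  show ?thesis unfolding Zpt_def Zpart_def by measurable
qed

section \<open>Subadditivity and renewal bounds\<close>

lemma powr_add_le_add_powr:
  fixes a b d :: real
  assumes "a \<ge> 0" "b \<ge> 0" "0 < d" "d \<le> 1"
  shows "(a + b) powr d \<le> a powr d + b powr d"
proof (cases "a + b = 0")
  case False
  then have s: "a + b > 0" using assms by simp
  have le_powr: "x \<le> x powr d" if "0 \<le> x" "x \<le> 1" for x :: real
    using powr_mono'[of d 1 x] that assms by (cases "x = 0") auto
  have "1 = a / (a + b) + b / (a + b)" using s by (simp add: add_divide_distrib[symmetric])
  also have "\<dots> \<le> (a / (a + b)) powr d + (b / (a + b)) powr d"
    using assms s by (intro add_mono le_powr) auto
  also have "\<dots> = (a powr d + b powr d) / (a + b) powr d"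
    using assms s by (simp add: powr_divide add_divide_distrib)
  finally show ?thesis using s by (simp add: divide_simps)
qed (use assms in simp)

lemma powr_sum_le_sum_powr:
  fixes f :: "'b \<Rightarrow> real"
  assumes "\<And>i. i \<in> S \<Longrightarrow> f i \<ge> 0" "0 < d" "d \<le> 1"
  shows "(sum f S) powr d \<le> (\<Sum>i\<in>S. f i powr d)"
  using assms
proof (induction S rule: infinite_finite_induct)
  case (insert x F)
  have "sum f (insert x F) powr d \<le> f x powr d + sum f F powr d"
    using insert by (simp add: powr_add_le_add_powr sum_nonneg)
  then show ?case using insert by simp
qed auto

lemma powr_le_one_plus:
  fixes z d :: real
  assumes "z \<ge> 0" "0 \<le> d" "d \<le> 1"
  shows "z powr d \<le> 1 + z"
proof (cases "z \<le> 1")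
  case True
  then show ?thesis using assms powr_le1[of d z] by simp
next
  case False
  then show ?thesis using assms powr_mono[of d 1 z] by simp
qed

lemma ln_le_powr_div:
  fixes z d :: real
  assumes "z \<ge> 0" "d > 0"
  shows "ln z \<le> z powr d / d"
proof (cases "z = 0")
  case False
  then have "ln (z powr d) \<le> z powr d - 1" using assms by (intro ln_le_minus_one) simp
  then show ?thesis using assms False by (simp add: ln_powr field_simps)
qed simp

lemma exit_weight_nonneg:
  assumes "\<forall>n\<ge>2. K n \<ge> 0"
  shows "exit_weight K \<beta> h k w e \<ge> 0"
  unfolding exit_weight_def using assms
  by (intro mult_nonneg_nonneg sum_nonneg Zpt_nonneg) (auto simp: below_def)

lemma exit_weight_powr_le:
  assumes K: "\<forall>n\<ge>2. K n \<ge> 0" and d: "0 < d" "d \<le> 1"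
  shows "exit_weight K \<beta> h k w e powr d \<le>
     exp (d * (\<beta> * w e + h)) * (\<Sum>q\<in>below e \<inter> below (k, k). Kjump K q e powr d * Zpt K \<beta> h w q powr d)"
proof -
  have nonneg: "Zpt K \<beta> h w q * Kjump K q e \<ge> 0" if "q \<in> below e" for q
    using that K by (intro mult_nonneg_nonneg Zpt_nonneg) (auto simp: below_def)
  have "exit_weight K \<beta> h k w e powr d =
      exp (d * (\<beta> * w e + h)) * (\<Sum>q\<in>below e \<inter> below (k, k). Zpt K \<beta> h w q * Kjump K q e) powr d"
    using nonneg by (simp add: exit_weight_def powr_mult sum_nonneg exp_powr_real mult.commute)
  also have "\<dots> \<le> exp (d * (\<beta> * w e + h)) * (\<Sum>q\<in>below e \<inter> below (k, k). (Zpt K \<beta> h w q * Kjump K q e) powr d)"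
    using nonneg d by (intro mult_left_mono powr_sum_le_sum_powr) auto
  also have "\<dots> = exp (d * (\<beta> * w e + h)) * (\<Sum>q\<in>below e \<inter> below (k, k). Kjump K q e powr d * Zpt K \<beta> h w q powr d)"
    using K by (intro arg_cong2[where f = "(*)"] sum.cong refl)
               (auto simp: below_def powr_mult Zpt_nonneg mult.commute)
  finally show ?thesis .
qed

lemma renewal_inequality_bound:
  fixes a r :: "nat \<times> nat \<Rightarrow> real"
  assumes "k \<ge> 1" and r_nonneg: "\<And>e. r e \<ge> 0"
    and renewal: "\<And>p. p \<notin> below (k, k) \<Longrightarrow> a p \<le> (\<Sum>e\<in>{..p} - below (k, k). r e * a (p - e))"
    and mass: "\<And>S. finite S \<Longrightarrow> S \<inter> below (k, k) = {} \<Longrightarrow> sum r S \<le> 1"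
  shows "a p \<le> max 0 (Max (a ` below (k, k)))"
proof (induction "fst p + snd p" arbitrary: p rule: less_induct)
  case less
  let ?C = "max 0 (Max (a ` below (k, k)))"
  show ?case
  proof (cases "p \<in> below (k, k)")
    case True
    then show ?thesis by (simp add: le_max_iff_disj)
  next
    case False
    have "a p \<le> (\<Sum>e\<in>{..p} - below (k, k). r e * a (p - e))" by (rule renewal[OF False])
    also have "\<dots> \<le> (\<Sum>e\<in>{..p} - below (k, k). r e * ?C)"
    proof (intro sum_mono mult_left_mono r_nonneg less.hyps)
      fix e assume "e \<in> {..p} - below (k, k)"
      then have "e \<noteq> (0, 0)" and "e \<le> p" using assms(1) by (auto simp: below_def)
      then show "fst (p - e) + snd (p - e) < fst p + snd p"
        by (cases e) (auto simp: less_eq_prod_def)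
    qed
    also have "\<dots> = sum r ({..p} - below (k, k)) * ?C" by (simp add: sum_distrib_right)
    also have "\<dots> \<le> ?C"
      using mass[of "{..p} - below (k, k)"] by (intro mult_left_le_one_le) (auto simp: atMost_prod_nat sum_nonneg r_nonneg)
    finally show ?thesis .
  qed
qed

lemma ennreal_sum_le_infsum:
  fixes f :: "'b \<Rightarrow> real"
  assumes "finite S" "\<And>e. e \<in> S - R \<Longrightarrow> f e = 0" "\<And>e. f e \<ge> 0"
  shows "ennreal (sum f S) \<le> (\<Sum>\<^sub>\<infinity>e\<in>R. ennreal (f e))"
proof -
  have "sum f S = sum f (S \<inter> R)" using assms(1,2) by (intro sum.mono_neutral_right) auto
  then have "ennreal (sum f S) = (\<Sum>\<^sub>\<infinity>e\<in>S \<inter> R. ennreal (f e))"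
    using assms(1,3) by (simp add: sum_ennreal)
  also have "\<dots> \<le> (\<Sum>\<^sub>\<infinity>e\<in>R. ennreal (f e))"
    by (intro infsum_mono_neutral nonneg_summable_on_complete) auto
  finally show ?thesis .
qed

lemma exit_mass_le_one:
  fixes Kp :: "nat \<Rightarrow> real" and Ac :: "nat \<Rightarrow> nat \<Rightarrow> real" and c :: real
  assumes nonneg: "c \<ge> 0" "\<And>i j. Ac i j \<ge> 0" "\<And>n. Kp n \<ge> 0"
    and rho: "(\<Sum>\<^sub>\<infinity>(n, m)\<in>{k..} \<times> {k..}.
                 ennreal (c * (\<Sum>i<k. \<Sum>j<k. Kp (n - i + (m - j)) * Ac i j)))
            + (\<Sum>\<^sub>\<infinity>(n, m)\<in>{1..k-1} \<times> {k..}.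
                 ennreal (c * (\<Sum>i<n. \<Sum>j<k. Kp (n - i + (m - j)) * Ac i j)))
            + (\<Sum>\<^sub>\<infinity>(n, m)\<in>{k..} \<times> {1..k-1}.
                 ennreal (c * (\<Sum>i<k. \<Sum>j<m. Kp (n - i + (m - j)) * Ac i j)))
            \<le> 1"
    and S: "finite S" "S \<inter> below (k, k) = {}"
  shows "(\<Sum>e\<in>S. c * (\<Sum>q\<in>below e \<inter> below (k, k). Kp (fst e - fst q + (snd e - snd q)) * Ac (fst q) (snd q))) \<le> 1"
proof -
  define f where "f = (\<lambda>(n, m). c * (\<Sum>i<min n k. \<Sum>j<min m k. Kp (n - i + (m - j)) * Ac i j))"
  have f_eq: "c * (\<Sum>q\<in>below e \<inter> below (k, k). Kp (fst e - fst q + (snd e - snd q)) * Ac (fst q) (snd q)) = f e" for e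
  proof (cases e)
    case (Pair n m)
    have "below (n, m) \<inter> below (k, k) = {..<min n k} \<times> {..<min m k}"
      by (auto simp: below_def)
    then show ?thesis
      unfolding Pair f_def by (simp only: sum.cartesian_product case_prod_unfold prod.case fst_conv snd_conv)
  qed
  have f_nonneg: "f e \<ge> 0" for e
    using nonneg by (auto simp: f_def case_prod_beta intro!: mult_nonneg_nonneg sum_nonneg)
  (* Off the box, f is the summand of rho1, rho2 or rho3 on R1, R2, R3, and vanishes elsewhere. *)
  define R1 R2 R3 where "R1 = {k..} \<times> {k..}" and "R2 = {1..k-1} \<times> {k..}" and "R3 = {k..} \<times> {1..k-1}"
  have f_zero: "f e = 0" if "e \<in> S - (R1 \<union> R2 \<union> R3)" for e
  proof -
    have "fst e = 0 \<or> snd e = 0" using that S(2) by (cases e) (auto simp: R1_def R2_def R3_def below_def)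
    then show ?thesis by (auto simp: f_def case_prod_beta)
  qed
  have "ennreal (sum f S) \<le> (\<Sum>\<^sub>\<infinity>e\<in>R1 \<union> R2 \<union> R3. ennreal (f e))"
    using S(1) f_zero f_nonneg by (rule ennreal_sum_le_infsum)
  also have "\<dots> = (\<Sum>\<^sub>\<infinity>e\<in>R1. ennreal (f e)) + (\<Sum>\<^sub>\<infinity>e\<in>R2. ennreal (f e)) + (\<Sum>\<^sub>\<infinity>e\<in>R3. ennreal (f e))"
  proof -
    have "R1 \<inter> R2 = {}" "(R1 \<union> R2) \<inter> R3 = {}" by (auto simp: R1_def R2_def R3_def)
    then show ?thesis by (simp add: infsum_Un_disjoint nonneg_summable_on_complete)
  qed
  also have "\<dots> \<le> 1"
  proof -
    have "(\<Sum>\<^sub>\<infinity>e\<in>R1. ennreal (f e)) = (\<Sum>\<^sub>\<infinity>(n, m)\<in>{k..} \<times> {k..}. ennreal (c * (\<Sum>i<k. \<Sum>j<k. Kp (n - i + (m - j)) * Ac i j)))"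
      unfolding R1_def by (intro infsum_cong) (auto simp: f_def)
    moreover have "(\<Sum>\<^sub>\<infinity>e\<in>R2. ennreal (f e)) = (\<Sum>\<^sub>\<infinity>(n, m)\<in>{1..k-1} \<times> {k..}. ennreal (c * (\<Sum>i<n. \<Sum>j<k. Kp (n - i + (m - j)) * Ac i j)))"
      unfolding R2_def by (intro infsum_cong) (auto simp: f_def min_def)
    moreover have "(\<Sum>\<^sub>\<infinity>e\<in>R3. ennreal (f e)) = (\<Sum>\<^sub>\<infinity>(n, m)\<in>{k..} \<times> {1..k-1}. ennreal (c * (\<Sum>i<k. \<Sum>j<m. Kp (n - i + (m - j)) * Ac i j)))"
      unfolding R3_def by (intro infsum_cong) (auto simp: f_def min_def add.commute)
    ultimately show ?thesis using rho by simp
  qed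
  finally show ?thesis by (simp add: f_eq ennreal_le_1)
qed

section \<open>The environment\<close>

locale iid_field = prob_space P for P :: "'a measure" +
  fixes \<omega> :: "nat \<times> nat \<Rightarrow> 'a \<Rightarrow> real"
  assumes indep: "indep_vars (\<lambda>_. borel) \<omega> UNIV"
    and ident: "\<forall>p. distr P borel (\<omega> p) = distr P borel (\<omega> (1, 1))"
begin

lemma measurable_site [measurable]: "\<omega> p \<in> borel_measurable P"
  using indep by (cases p) (auto simp: indep_vars_def)

lemma measurable_shifted_field:
  "(\<lambda>x q. \<omega> (q + e) x) \<in> P \<rightarrow>\<^sub>M PiM UNIV (\<lambda>_. borel)"
proof -
  have "(\<lambda>x. \<lambda>q\<in>UNIV. \<omega> (q + e) x) \<in> P \<rightarrow>\<^sub>M PiM UNIV (\<lambda>_. borel)"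
    by (intro measurable_restrict) simp
  then show ?thesis by (simp add: restrict_UNIV)
qed

lemma expectation_site:
  fixes f :: "real \<Rightarrow> real"
  assumes [measurable]: "f \<in> borel_measurable borel"
  shows "expectation (\<lambda>x. f (\<omega> p x)) = expectation (\<lambda>x. f (\<omega> (1, 1) x))"
    and "integrable P (\<lambda>x. f (\<omega> p x)) \<longleftrightarrow> integrable P (\<lambda>x. f (\<omega> (1, 1) x))"
  using integral_distr[of "\<omega> _" P borel f] integrable_distr_eq[of "\<omega> _" P borel f] ident
  by (metis measurable_site assms)+

lemma indep_blocks:
  fixes F G :: "(nat \<times> nat \<Rightarrow> real) \<Rightarrow> real"
  assumes "I \<inter> J = {}"
    and F: "F \<in> borel_measurable (PiM I (\<lambda>_. borel))" "integrable P (\<lambda>x. F (restrict (\<lambda>p. \<omega> p x) I))"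
    and G: "G \<in> borel_measurable (PiM J (\<lambda>_. borel))" "integrable P (\<lambda>x. G (restrict (\<lambda>p. \<omega> p x) J))"
  shows "integrable P (\<lambda>x. F (restrict (\<lambda>p. \<omega> p x) I) * G (restrict (\<lambda>p. \<omega> p x) J))"
    and "expectation (\<lambda>x. F (restrict (\<lambda>p. \<omega> p x) I) * G (restrict (\<lambda>p. \<omega> p x) J)) =
         expectation (\<lambda>x. F (restrict (\<lambda>p. \<omega> p x) I)) * expectation (\<lambda>x. G (restrict (\<lambda>p. \<omega> p x) J))"
proof -
  have "indep_var (PiM I (\<lambda>_. borel)) (\<lambda>x. restrict (\<lambda>p. \<omega> p x) I)
                  (PiM J (\<lambda>_. borel)) (\<lambda>x. restrict (\<lambda>p. \<omega> p x) J)"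
    using indep_var_restrict[OF indep assms(1)] by simp
  then have iv: "indep_var borel (F \<circ> (\<lambda>x. restrict (\<lambda>p. \<omega> p x) I)) borel (G \<circ> (\<lambda>x. restrict (\<lambda>p. \<omega> p x) J))"
    by (rule indep_var_compose[OF _ F(1) G(1)])
  show "integrable P (\<lambda>x. F (restrict (\<lambda>p. \<omega> p x) I) * G (restrict (\<lambda>p. \<omega> p x) J))"
    using indep_var_integrable[OF iv] F(2) G(2) by (simp add: comp_def)
  show "expectation (\<lambda>x. F (restrict (\<lambda>p. \<omega> p x) I) * G (restrict (\<lambda>p. \<omega> p x) J)) =
        expectation (\<lambda>x. F (restrict (\<lambda>p. \<omega> p x) I)) * expectation (\<lambda>x. G (restrict (\<lambda>p. \<omega> p x) J))"
    using indep_var_lebesgue_integral[OF iv] F(2) G(2) by (simp add: comp_def)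
qed

abbreviation site_law :: "real measure" where
  "site_law \<equiv> distr P borel (\<omega> (1, 1))"

lemma distr_field:
  "distr P (PiM UNIV (\<lambda>_. borel)) (\<lambda>x q. \<omega> q x) = PiM UNIV (\<lambda>_. site_law)"
proof -
  have "distr P (PiM UNIV (\<lambda>_. borel)) (\<lambda>x. \<lambda>q\<in>UNIV. \<omega> q x) = PiM UNIV (\<lambda>q. distr P borel (\<omega> q))"
    using indep indep_vars_iff_distr_eq_PiM[where I = UNIV and M' = "\<lambda>_. borel" and X = \<omega>] by simp
  also have "\<dots> = PiM UNIV (\<lambda>_. site_law)"
    using ident by (intro PiM_cong) auto
  finally show ?thesis by (simp add: restrict_UNIV)
qed

lemma distr_shifted_field:
  "distr P (PiM UNIV (\<lambda>_. borel)) (\<lambda>x q. \<omega> (q + e) x) = PiM UNIV (\<lambda>_. site_law)"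
proof -
  interpret site: prob_space site_law by (rule prob_space_distr) simp
  have shift_meas: "(\<lambda>w q. w (q + e)) \<in> PiM UNIV (\<lambda>_. borel) \<rightarrow>\<^sub>M PiM UNIV (\<lambda>_::nat \<times> nat. borel :: real measure)"
  proof -
    have "(\<lambda>w. \<lambda>q\<in>UNIV. w (q + e)) \<in> PiM UNIV (\<lambda>_. borel) \<rightarrow>\<^sub>M PiM UNIV (\<lambda>_::nat \<times> nat. borel :: real measure)"
      by (intro measurable_restrict measurable_component_singleton) simp_all
    then show ?thesis by (simp add: restrict_UNIV)
  qed
  have "distr P (PiM UNIV (\<lambda>_. borel)) (\<lambda>x q. \<omega> (q + e) x)
      = distr (distr P (PiM UNIV (\<lambda>_. borel)) (\<lambda>x q. \<omega> q x)) (PiM UNIV (\<lambda>_. borel)) (\<lambda>w q. w (q + e))"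
    using distr_distr[OF shift_meas measurable_shifted_field[of 0]] by (simp add: comp_def)
  also have "\<dots> = distr (PiM UNIV (\<lambda>_. site_law)) (PiM UNIV (\<lambda>_. site_law)) (\<lambda>w. \<lambda>q\<in>UNIV. w (q + e))"
    unfolding distr_field by (intro distr_cong refl sets_PiM_cong) (auto simp: restrict_UNIV)
  also have "\<dots> = PiM UNIV (\<lambda>_. site_law)"
  proof (rule distr_PiM_reindex[of UNIV "\<lambda>_. site_law" "\<lambda>q. q + e" UNIV, OF site.prob_space_axioms])
    show "inj_on (\<lambda>q::nat \<times> nat. q + e) UNIV" by (simp add: inj_on_def)
  qed simp
  finally show ?thesis .
qed

lemma expectation_shift_invariant:
  fixes F :: "(nat \<times> nat \<Rightarrow> real) \<Rightarrow> real"
  assumes [measurable]: "F \<in> borel_measurable (PiM UNIV (\<lambda>_. borel))"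
  shows "expectation (\<lambda>x. F (\<lambda>q. \<omega> (q + e) x)) = expectation (\<lambda>x. F (\<lambda>q. \<omega> q x))"
    and "integrable P (\<lambda>x. F (\<lambda>q. \<omega> (q + e) x)) \<longleftrightarrow> integrable P (\<lambda>x. F (\<lambda>q. \<omega> q x))"
proof -
  note meas = measurable_shifted_field
  show "expectation (\<lambda>x. F (\<lambda>q. \<omega> (q + e) x)) = expectation (\<lambda>x. F (\<lambda>q. \<omega> q x))"
    using integral_distr[OF meas assms, of e] integral_distr[OF meas assms, of 0]
    by (simp add: distr_shifted_field distr_field)
  show "integrable P (\<lambda>x. F (\<lambda>q. \<omega> (q + e) x)) \<longleftrightarrow> integrable P (\<lambda>x. F (\<lambda>q. \<omega> q x))"
    using integrable_distr_eq[OF meas assms, of e] integrable_distr_eq[OF meas assms, of 0]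
    by (simp add: distr_shifted_field distr_field)
qed

end

section \<open>Fractional moments\<close>

locale fractional_moment = iid_field P \<omega> for P :: "'a measure" and \<omega> +
  fixes K :: "nat \<Rightarrow> real" and \<beta> h \<delta> :: real
  assumes K_nonneg: "\<forall>n\<ge>2. K n \<ge> 0"
    and delta: "0 < \<delta>" "\<delta> < 1"
    and exp_moments: "\<forall>b::real. integrable P (\<lambda>x. exp (b * \<omega> (1, 1) x))"
begin

definition Zfield :: "nat \<times> nat \<Rightarrow> 'a \<Rightarrow> real" where
  "Zfield q x = Zpt K \<beta> h (\<lambda>p. \<omega> p x) q"

definition frac_moment :: "nat \<times> nat \<Rightarrow> real" where
  "frac_moment q = expectation (\<lambda>x. Zfield q x powr \<delta>)"

definition c_delta :: real where
  "c_delta = expectation (\<lambda>x. exp (\<delta> * (\<beta> * \<omega> (1, 1) x + h)))"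

(* Z_q of the environment w o T, as a function of the coordinates in T ` grid q only, so that it is
   measurable on any product space PiM J with J containing them. *)

definition Zwindow :: "(nat \<times> nat \<Rightarrow> nat \<times> nat) \<Rightarrow> nat \<times> nat \<Rightarrow> (nat \<times> nat \<Rightarrow> real) \<Rightarrow> real" where
  "Zwindow T q r = Zpt K \<beta> h (\<lambda>s. if s \<in> grid q then r (T s) else 0) q"

lemma measurable_Zwindow:
  assumes "T ` grid q \<subseteq> J"
  shows "Zwindow T q \<in> borel_measurable (PiM J (\<lambda>_. borel))"
  unfolding Zwindow_def
proof (rule measurable_Zpt)
  fix s
  show "(\<lambda>r. if s \<in> grid q then r (T s) else 0) \<in> borel_measurable (PiM J (\<lambda>_. borel))"
    using assms by (cases "s \<in> grid q") (auto simp: measurable_component_singleton)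
qed

lemma Zwindow_restrict:
  assumes "T ` grid q \<subseteq> J"
  shows "Zwindow T q (restrict w J) = Zpt K \<beta> h (\<lambda>s. w (T s)) q"
  unfolding Zwindow_def using assms by (intro Zpt_local) auto

lemma Zwindow_Zfield: "grid q \<subseteq> J \<Longrightarrow> Zwindow id q (restrict (\<lambda>p. \<omega> p x) J) = Zfield q x"
  using Zwindow_restrict[of id q J] by (simp add: Zfield_def)

lemma Zfield_nonneg: "Zfield q x \<ge> 0"
  unfolding Zfield_def using K_nonneg by (rule Zpt_nonneg)

lemma measurable_Zfield [measurable]: "Zfield q \<in> borel_measurable P"
  unfolding Zfield_def[abs_def] by measurable

lemma integrable_exp_site: "integrable P (\<lambda>x. exp (b * \<omega> p x + a))"
proof -
  have "integrable P (\<lambda>x. exp a * exp (b * \<omega> p x))"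
    using expectation_site(2)[of "\<lambda>y. exp (b * y)" p] exp_moments by simp
  then show ?thesis by (simp add: exp_add mult.commute)
qed

lemma integrable_Zfield: "integrable P (Zfield q)"
proof (induction "fst q + snd q" arbitrary: q rule: less_induct)
  case less
  show ?case
  proof (cases "q = (0, 0)")
    case False
    have "integrable P (\<lambda>x. exp (\<beta> * \<omega> q x + h) * Zfield q' x)" if q': "q' \<in> below q" for q'
    proof -
      have disj: "{q} \<inter> grid q' = {}" using q' by (auto simp: below_def grid_def)
      have IH: "integrable P (Zfield q')" using q' by (intro less.hyps) (auto simp: below_def)
      have [measurable]: "(\<lambda>r. exp (\<beta> * r q + h)) \<in> borel_measurable (PiM {q} (\<lambda>_. borel))"
        by measurable
      show ?thesis
        using indep_blocks(1)[OF disj, of "\<lambda>r. exp (\<beta> * r q + h)" "Zwindow id q'"]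
          measurable_Zwindow[of id q' "grid q'"] integrable_exp_site[of \<beta> q h]
        by (simp add: Zwindow_Zfield IH)
    qed
    then have "integrable P (\<lambda>x. \<Sum>q'\<in>below q. Kjump K q' q * (exp (\<beta> * \<omega> q x + h) * Zfield q' x))"
      by (intro Bochner_Integration.integrable_sum integrable_mult_right)
    then show ?thesis
      by (simp add: Zfield_def[abs_def] Zpt_rec[OF False] sum_distrib_left algebra_simps)
  qed (simp add: Zfield_def[abs_def])
qed

lemma integrable_Zfield_powr: "integrable P (\<lambda>x. Zfield q x powr \<delta>)"
proof (rule Bochner_Integration.integrable_bound)
  show "integrable P (\<lambda>x. 1 + Zfield q x)" using integrable_Zfield by simp
  show "AE x in P. norm (Zfield q x powr \<delta>) \<le> norm (1 + Zfield q x)"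
    using Zfield_nonneg powr_le_one_plus delta by (auto intro!: AE_I2)
qed measurable

lemma frac_moment_nonneg: "frac_moment q \<ge> 0"
  unfolding frac_moment_def by (rule integral_nonneg_AE) auto

lemma c_delta_nonneg: "c_delta \<ge> 0"
  unfolding c_delta_def by (rule integral_nonneg_AE) auto

lemma frac_moment_shift:
  "integrable P (\<lambda>x. Zpt K \<beta> h (shift e (\<lambda>p. \<omega> p x)) d powr \<delta>)"
  "expectation (\<lambda>x. Zpt K \<beta> h (shift e (\<lambda>p. \<omega> p x)) d powr \<delta>) = frac_moment d"
proof -
  have [measurable]: "(\<lambda>w. Zpt K \<beta> h w d powr \<delta>) \<in> borel_measurable (PiM UNIV (\<lambda>_. borel))"
    by measurable
  show "integrable P (\<lambda>x. Zpt K \<beta> h (shift e (\<lambda>p. \<omega> p x)) d powr \<delta>)"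
    using expectation_shift_invariant(2)[of "\<lambda>w. Zpt K \<beta> h w d powr \<delta>" e] integrable_Zfield_powr[of d]
    by (simp add: shift_def Zfield_def)
  show "expectation (\<lambda>x. Zpt K \<beta> h (shift e (\<lambda>p. \<omega> p x)) d powr \<delta>) = frac_moment d"
    using expectation_shift_invariant(1)[of "\<lambda>w. Zpt K \<beta> h w d powr \<delta>" e]
    by (simp add: shift_def Zfield_def frac_moment_def)
qed

lemma site_weight_Zfield:
  assumes "q \<in> below e"
  shows "integrable P (\<lambda>x. exp (\<delta> * (\<beta> * \<omega> e x + h)) * Zfield q x powr \<delta>)"
    and "expectation (\<lambda>x. exp (\<delta> * (\<beta> * \<omega> e x + h)) * Zfield q x powr \<delta>) = c_delta * frac_moment q"
proof -
  have disj: "{e} \<inter> grid q = {}" using assms by (auto simp: below_def grid_def)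
  have [measurable]: "Zwindow id q \<in> borel_measurable (PiM (grid q) (\<lambda>_. borel))"
    by (auto intro: measurable_Zwindow)
  have "integrable P (\<lambda>x. exp (\<delta> * (\<beta> * \<omega> e x + h)))"
    using integrable_exp_site[of "\<delta> * \<beta>" e "\<delta> * h"] by (simp add: algebra_simps)
  moreover have "expectation (\<lambda>x. exp (\<delta> * (\<beta> * \<omega> e x + h))) = c_delta"
    unfolding c_delta_def by (rule expectation_site(1)) simp
  ultimately show "integrable P (\<lambda>x. exp (\<delta> * (\<beta> * \<omega> e x + h)) * Zfield q x powr \<delta>)"
    and "expectation (\<lambda>x. exp (\<delta> * (\<beta> * \<omega> e x + h)) * Zfield q x powr \<delta>) = c_delta * frac_moment q"
    using indep_blocks[OF disj, of "\<lambda>r. exp (\<delta> * (\<beta> * r e + h))" "\<lambda>r. Zwindow id q r powr \<delta>"]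
      integrable_Zfield_powr[of q]
    by (simp_all add: Zwindow_Zfield frac_moment_def)
qed

lemma expectation_exit_term:
  assumes "q \<in> below e"
  shows "integrable P (\<lambda>x. exp (\<delta> * (\<beta> * \<omega> e x + h)) * Zfield q x powr \<delta> *
                            Zpt K \<beta> h (shift e (\<lambda>p. \<omega> p x)) d powr \<delta>)"
    and "expectation (\<lambda>x. exp (\<delta> * (\<beta> * \<omega> e x + h)) * Zfield q x powr \<delta> *
                            Zpt K \<beta> h (shift e (\<lambda>p. \<omega> p x)) d powr \<delta>)
         = c_delta * frac_moment q * frac_moment d"
proof -
  (* The factors depend on the disjoint blocks {e} \<union> grid q and e + grid d. *)
  let ?I = "insert e (grid q)" and ?J = "(\<lambda>s. s + e) ` grid d"
  let ?\<omega> = "\<lambda>x. \<lambda>p. \<omega> p x"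
  have disj: "?I \<inter> ?J = {}"
    using assms by (auto simp: below_def grid_def prod_eq_iff)
  have [measurable]: "Zwindow id q \<in> borel_measurable (PiM ?I (\<lambda>_. borel))"
    "Zwindow (\<lambda>s. s + e) d \<in> borel_measurable (PiM ?J (\<lambda>_. borel))"
    by (auto intro!: measurable_Zwindow)
  define F where "F r = exp (\<delta> * (\<beta> * r e + h)) * Zwindow id q r powr \<delta>" for r
  define G where "G r = Zwindow (\<lambda>s. s + e) d r powr \<delta>" for r
  have F_meas: "F \<in> borel_measurable (PiM ?I (\<lambda>_. borel))"
    and G_meas: "G \<in> borel_measurable (PiM ?J (\<lambda>_. borel))"
    unfolding F_def[abs_def] G_def[abs_def] by measurable
  have F_restrict: "F (restrict (?\<omega> x) ?I) = exp (\<delta> * (\<beta> * \<omega> e x + h)) * Zfield q x powr \<delta>" for x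
    using Zwindow_Zfield[of q ?I] by (simp add: F_def subset_insertI)
  have G_restrict: "G (restrict (?\<omega> x) ?J) = Zpt K \<beta> h (shift e (?\<omega> x)) d powr \<delta>" for x
    using Zwindow_restrict[of "\<lambda>s. s + e" d ?J] by (simp add: G_def shift_def)
  have F_int: "integrable P (\<lambda>x. F (restrict (?\<omega> x) ?I))"
    and F_exp: "expectation (\<lambda>x. F (restrict (?\<omega> x) ?I)) = c_delta * frac_moment q"
    using site_weight_Zfield[OF assms] by (simp_all only: F_restrict)
  have G_int: "integrable P (\<lambda>x. G (restrict (?\<omega> x) ?J))"
    and G_exp: "expectation (\<lambda>x. G (restrict (?\<omega> x) ?J)) = frac_moment d"
    using frac_moment_shift[of e d] by (simp_all only: G_restrict)
  have "integrable P (\<lambda>x. F (restrict (?\<omega> x) ?I) * G (restrict (?\<omega> x) ?J))"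
    and "expectation (\<lambda>x. F (restrict (?\<omega> x) ?I) * G (restrict (?\<omega> x) ?J))
           = c_delta * frac_moment q * frac_moment d"
    using indep_blocks[OF disj F_meas F_int G_meas G_int] unfolding F_exp G_exp by blast+
  then show "integrable P (\<lambda>x. exp (\<delta> * (\<beta> * \<omega> e x + h)) * Zfield q x powr \<delta> *
                            Zpt K \<beta> h (shift e (?\<omega> x)) d powr \<delta>)"
    and "expectation (\<lambda>x. exp (\<delta> * (\<beta> * \<omega> e x + h)) * Zfield q x powr \<delta> *
                            Zpt K \<beta> h (shift e (?\<omega> x)) d powr \<delta>)
         = c_delta * frac_moment q * frac_moment d"
    by (simp_all only: F_restrict G_restrict)
qed

lemma Zfield_powr_exit_bound:
  assumes "k \<ge> 1" "p \<notin> below (k, k)"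
  shows "Zfield p x powr \<delta> \<le> (\<Sum>e\<in>{..p} - below (k, k). \<Sum>q\<in>below e \<inter> below (k, k).
           Kjump K q e powr \<delta> * (exp (\<delta> * (\<beta> * \<omega> e x + h)) * Zfield q x powr \<delta> *
                                 Zpt K \<beta> h (shift e (\<lambda>s. \<omega> s x)) (p - e) powr \<delta>))"
proof -
  let ?w = "\<lambda>s. \<omega> s x"
  let ?X = "exit_weight K \<beta> h k ?w" and ?Z = "\<lambda>e. Zpt K \<beta> h (shift e ?w) (p - e)"
  have nonneg: "?X e \<ge> 0" "?Z e \<ge> 0" for e
    using K_nonneg by (simp_all add: exit_weight_nonneg Zpt_nonneg)
  have "Zfield p x powr \<delta> = (\<Sum>e\<in>{..p} - below (k, k). ?X e * ?Z e) powr \<delta>"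
    by (simp add: Zfield_def Zpt_exit_decomp[OF assms])
  also have "\<dots> \<le> (\<Sum>e\<in>{..p} - below (k, k). ?X e powr \<delta> * ?Z e powr \<delta>)"
    using delta nonneg powr_sum_le_sum_powr[of "{..p} - below (k, k)" "\<lambda>e. ?X e * ?Z e" \<delta>]
    by (simp add: powr_mult)
  also have "\<dots> \<le> (\<Sum>e\<in>{..p} - below (k, k).
      (exp (\<delta> * (\<beta> * \<omega> e x + h)) * (\<Sum>q\<in>below e \<inter> below (k, k). Kjump K q e powr \<delta> * Zfield q x powr \<delta>))
        * ?Z e powr \<delta>)"
    using exit_weight_powr_le[OF K_nonneg delta(1) less_imp_le[OF delta(2)]] nonneg
    by (intro sum_mono mult_right_mono) (simp_all add: Zfield_def)
  also have "\<dots> = (\<Sum>e\<in>{..p} - below (k, k). \<Sum>q\<in>below e \<inter> below (k, k).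
           Kjump K q e powr \<delta> * (exp (\<delta> * (\<beta> * \<omega> e x + h)) * Zfield q x powr \<delta> * ?Z e powr \<delta>))"
    by (simp add: sum_distrib_left sum_distrib_right mult_ac)
  finally show ?thesis .
qed

definition exit_kernel :: "nat \<Rightarrow> nat \<times> nat \<Rightarrow> real" where
  "exit_kernel k e = c_delta * (\<Sum>q\<in>below e \<inter> below (k, k). Kjump K q e powr \<delta> * frac_moment q)"

lemma frac_moment_exit_bound:
  assumes "k \<ge> 1" "p \<notin> below (k, k)"
  shows "frac_moment p \<le> (\<Sum>e\<in>{..p} - below (k, k). exit_kernel k e * frac_moment (p - e))"
proof -
  let ?F = "\<lambda>e q x. Kjump K q e powr \<delta> * (exp (\<delta> * (\<beta> * \<omega> e x + h)) * Zfield q x powr \<delta> *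
                                           Zpt K \<beta> h (shift e (\<lambda>s. \<omega> s x)) (p - e) powr \<delta>)"
  have int: "integrable P (?F e q)" if "q \<in> below e" for e q
    using expectation_exit_term(1)[OF that] by simp
  have "frac_moment p \<le> expectation (\<lambda>x. \<Sum>e\<in>{..p} - below (k, k). \<Sum>q\<in>below e \<inter> below (k, k). ?F e q x)"
    unfolding frac_moment_def using Zfield_powr_exit_bound[OF assms]
    by (intro integral_mono integrable_Zfield_powr Bochner_Integration.integrable_sum int) auto
  also have "\<dots> = (\<Sum>e\<in>{..p} - below (k, k). expectation (\<lambda>x. \<Sum>q\<in>below e \<inter> below (k, k). ?F e q x))"
    by (rule Bochner_Integration.integral_sum) (auto intro!: Bochner_Integration.integrable_sum int)
  also have "\<dots> = (\<Sum>e\<in>{..p} - below (k, k). \<Sum>q\<in>below e \<inter> below (k, k). expectation (?F e q))"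
    by (intro sum.cong refl Bochner_Integration.integral_sum int) auto
  also have "\<dots> = (\<Sum>e\<in>{..p} - below (k, k). \<Sum>q\<in>below e \<inter> below (k, k).
                     Kjump K q e powr \<delta> * (c_delta * frac_moment q * frac_moment (p - e)))"
  proof (intro sum.cong refl)
    fix e q assume "q \<in> below e \<inter> below (k, k)"
    then show "expectation (?F e q) = Kjump K q e powr \<delta> * (c_delta * frac_moment q * frac_moment (p - e))"
      using expectation_exit_term(2)[of q e "p - e"] by simp
  qed
  also have "\<dots> = (\<Sum>e\<in>{..p} - below (k, k). exit_kernel k e * frac_moment (p - e))"
    by (simp add: exit_kernel_def sum_distrib_left sum_distrib_right mult_ac)
  finally show ?thesis .
qed

lemma frac_moment_bounded:
  assumes k: "k \<ge> 1"
    and rho: "(\<Sum>\<^sub>\<infinity>(n, m)\<in>{k..} \<times> {k..}.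
                 ennreal (c_delta * (\<Sum>i<k. \<Sum>j<k. K (n - i + (m - j)) powr \<delta> * frac_moment (i, j))))
            + (\<Sum>\<^sub>\<infinity>(n, m)\<in>{1..k-1} \<times> {k..}.
                 ennreal (c_delta * (\<Sum>i<n. \<Sum>j<k. K (n - i + (m - j)) powr \<delta> * frac_moment (i, j))))
            + (\<Sum>\<^sub>\<infinity>(n, m)\<in>{k..} \<times> {1..k-1}.
                 ennreal (c_delta * (\<Sum>i<k. \<Sum>j<m. K (n - i + (m - j)) powr \<delta> * frac_moment (i, j))))
            \<le> 1"
  shows "frac_moment p \<le> max 0 (Max (frac_moment ` below (k, k)))"
proof (rule renewal_inequality_bound[OF k])
  show "exit_kernel k e \<ge> 0" for e
    unfolding exit_kernel_def
    by (intro mult_nonneg_nonneg sum_nonneg c_delta_nonneg frac_moment_nonneg) auto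
  show "frac_moment p \<le> (\<Sum>e\<in>{..p} - below (k, k). exit_kernel k e * frac_moment (p - e))"
    if "p \<notin> below (k, k)" for p
    using frac_moment_exit_bound[OF k that] .
  show "sum (exit_kernel k) S \<le> 1" if "finite S" "S \<inter> below (k, k) = {}" for S
    using exit_mass_le_one[where Kp = "\<lambda>n. K n powr \<delta>" and Ac = "\<lambda>i j. frac_moment (i, j)",
        OF c_delta_nonneg frac_moment_nonneg _ rho that]
    by (simp add: exit_kernel_def)
qed

lemma expectation_ln_Zfield_le:
  assumes "frac_moment p \<le> C"
  shows "expectation (\<lambda>x. ln (Zfield p x)) \<le> C / \<delta>"
proof (cases "integrable P (\<lambda>x. ln (Zfield p x))")
  case True
  have "expectation (\<lambda>x. ln (Zfield p x)) \<le> expectation (\<lambda>x. Zfield p x powr \<delta> / \<delta>)"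
    using True integrable_Zfield_powr[of p] delta
    by (intro integral_mono ln_le_powr_div Zfield_nonneg) auto
  also have "\<dots> \<le> C / \<delta>"
    using assms delta by (simp add: frac_moment_def divide_right_mono)
  finally show ?thesis .
next
  case False
  then show ?thesis
    using frac_moment_nonneg[of p] assms delta by (simp add: not_integrable_integral_eq)
qed

lemma integrable_site: "integrable P (\<omega> p)"
proof (rule Bochner_Integration.integrable_bound)
  show "integrable P (\<lambda>x. exp (1 * \<omega> p x + 0) + exp ((-1) * \<omega> p x + 0))"
    by (intro Bochner_Integration.integrable_add integrable_exp_site)
  show "AE x in P. norm (\<omega> p x) \<le> norm (exp (1 * \<omega> p x + 0) + exp ((-1) * \<omega> p x + 0))"
  proof (rule AE_I2)
    fix x
    have "\<omega> p x \<le> exp (\<omega> p x)" "- \<omega> p x \<le> exp (- \<omega> p x)"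
      using exp_ge_add_one_self[of "\<omega> p x"] exp_ge_add_one_self[of "- \<omega> p x"] by linarith+
    moreover have "0 < exp (\<omega> p x)" "0 < exp (- \<omega> p x)" by simp_all
    ultimately have "\<bar>\<omega> p x\<bar> \<le> exp (\<omega> p x) + exp (- \<omega> p x)"
      by (simp only: abs_le_iff) linarith
    then show "norm (\<omega> p x) \<le> norm (exp (1 * \<omega> p x + 0) + exp ((-1) * \<omega> p x + 0))"
      by simp
  qed
qed simp

lemma expectation_energy:
  assumes centered: "expectation (\<omega> (1, 1)) = 0"
  shows "integrable P (\<lambda>x. \<Sum>q\<leftarrow>ps. \<beta> * \<omega> q x + h)"
    and "expectation (\<lambda>x. \<Sum>q\<leftarrow>ps. \<beta> * \<omega> q x + h) = h * length ps"
proof -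
  show int: "integrable P (\<lambda>x. \<Sum>q\<leftarrow>qs. \<beta> * \<omega> q x + h)" for qs
    by (induction qs) (auto intro!: Bochner_Integration.integrable_add integrable_mult_right integrable_site)
  have "expectation (\<lambda>x. \<beta> * \<omega> q x + h) = h" for q
    using expectation_site(1)[of "\<lambda>y. y" q] centered integrable_site[of q] by (simp add: prob_space)
  then show "expectation (\<lambda>x. \<Sum>q\<leftarrow>ps. \<beta> * \<omega> q x + h) = h * length ps"
  proof (induction ps)
    case (Cons a ps)
    have "integrable P (\<lambda>x. \<beta> * \<omega> a x + h)" by (simp add: integrable_site)
    then have "expectation (\<lambda>x. (\<beta> * \<omega> a x + h) + (\<Sum>q\<leftarrow>ps. \<beta> * \<omega> q x + h))
        = expectation (\<lambda>x. \<beta> * \<omega> a x + h) + expectation (\<lambda>x. \<Sum>q\<leftarrow>ps. \<beta> * \<omega> q x + h)"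
      by (rule Bochner_Integration.integral_add[OF _ int])
    then show ?case using Cons by (simp add: distrib_left)
  qed simp
qed

(* The min 0 covers the non-integrable case, where the Bochner integral is 0. *)
lemma expectation_ln_Zfield_ge:
  assumes centered: "expectation (\<omega> (1, 1)) = 0"
    and ps: "ps \<in> chains (fst p) (snd p)" and pos: "chain_prob K ps > 0"
  shows "expectation (\<lambda>x. ln (Zfield p x)) \<ge> min 0 (ln (chain_prob K ps) + h * length ps)"
proof (cases "integrable P (\<lambda>x. ln (Zfield p x))")
  case True
  let ?S = "\<lambda>x. \<Sum>q\<leftarrow>ps. \<beta> * \<omega> q x + h"
  have "p \<noteq> (0, 0)" using ps chains_empty_if_zero[of 0 0] by auto
  then have "chain_prob K ps * exp (?S x) \<le> Zfield p x" for x
    using ps K_nonneg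
    by (auto simp: Zfield_def Zpt_def Zpart_def finite_chains
             intro!: member_le_sum[OF ps] mult_nonneg_nonneg chain_prob_nonneg)
  then have bound: "ln (chain_prob K ps) + ?S x \<le> ln (Zfield p x)" for x
    using pos ln_mono[of "chain_prob K ps * exp (?S x)" "Zfield p x"] by (simp add: ln_mult)
  have "ln (chain_prob K ps) + h * length ps = expectation (\<lambda>x. ln (chain_prob K ps) + ?S x)"
    using expectation_energy[OF centered] by (simp add: prob_space)
  also have "\<dots> \<le> expectation (\<lambda>x. ln (Zfield p x))"
    using expectation_energy(1)[OF centered] True bound by (intro integral_mono) auto
  finally show ?thesis by simp
qed (simp add: not_integrable_integral_eq)

lemma Zfield_eq_Zpart: "p \<noteq> (0, 0) \<Longrightarrow> Zfield p x = Zpart K \<beta> h (\<lambda>q. \<omega> q x) (fst p) (snd p)"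
  by (simp add: Zfield_def Zpt_def)

lemma frac_moment_eq:
  "frac_moment (i, j) = (if i = 0 \<and> j = 0 then 1 else if i = 0 \<or> j = 0 then 0
                         else expectation (\<lambda>x. Zpart K \<beta> h (\<lambda>p. \<omega> p x) i j powr \<delta>))"
  by (auto simp: frac_moment_def Zfield_def Zpt_def Zpart_def chains_empty_if_zero prob_space)

end

section \<open>A trajectory with few jumps\<close>

lemma prod_list_ge_power:
  fixes f :: "'b \<Rightarrow> real"
  shows "(\<forall>s\<in>set ss. f s \<ge> \<mu>) \<Longrightarrow> \<mu> \<ge> 0 \<Longrightarrow> prod_list (map f ss) \<ge> \<mu> ^ length ss"
  by (induction ss) (auto intro!: mult_mono)

lemma binary_expansion:
  "q < 2 ^ k \<Longrightarrow> \<exists>js. (\<Sum>j\<leftarrow>js. (2::nat) ^ j) = q \<and> length js \<le> k \<and> (\<forall>j\<in>set js. j < k)"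
proof (induction k arbitrary: q)
  case (Suc k)
  have "q div 2 < 2 ^ k" using Suc.prems by auto
  with Suc.IH obtain js where js: "(\<Sum>j\<leftarrow>js. (2::nat) ^ j) = q div 2" "length js \<le> k" "\<forall>j\<in>set js. j < k"
    by blast
  have "(\<Sum>j\<leftarrow>map Suc js. (2::nat) ^ j) = 2 * (\<Sum>j\<leftarrow>js. 2 ^ j)"
    by (induction js) auto
  then have "(\<Sum>j\<leftarrow>map Suc js @ (if odd q then [0] else []). (2::nat) ^ j) = q"
    using js(1) by auto
  then show ?case using js by (intro exI[of _ "map Suc js @ (if odd q then [0] else [])"]) auto
qed simp

lemma chain_of_jumps:
  assumes "ss \<noteq> []" "\<forall>s\<in>set ss. s \<ge> 2" "sum_list ss = N + M" "length ss \<le> N" "length ss \<le> M"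
  shows "\<exists>ps\<in>chains N M. chain_prob K ps = prod_list (map K ss) \<and> length ps = length ss"
  using assms
proof (induction ss arbitrary: N M rule: rev_induct)
  case (snoc s ss)
  show ?case
  proof (cases "ss = []")
    case True
    then show ?thesis
      using snoc.prems by (intro bexI[of _ "[(N, M)]"] singleton_in_chains) (auto simp: chain_prob_singleton)
  next
    case False
    define r where "r = length ss"
    have "2 * r \<le> sum_list ss"
      using snoc.prems(2) sum_list_mono[of ss "\<lambda>_. 2" "\<lambda>x. x"] by (simp add: r_def sum_list_triv)
    (* Split the last jump s = a + b so that the other r jumps still fit into (N - a, M - b). *)
    define a where "a = (if s + r \<le> M + 1 then 1 else s + r - M)"
    define b where "b = s - a"
    have ab: "1 \<le> a" "1 \<le> b" "a + b = s" "r \<le> N - a" "r \<le> M - b" "a \<le> N" "b \<le> M"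
      using snoc.prems \<open>2 * r \<le> sum_list ss\<close> by (auto simp: a_def b_def r_def split: if_splits)
    have "\<exists>ps\<in>chains (N - a) (M - b). chain_prob K ps = prod_list (map K ss) \<and> length ps = length ss"
      using False snoc.prems ab by (intro snoc.IH) (auto simp: r_def)
    then obtain ps where ps: "ps \<in> chains (N - a) (M - b)" "chain_prob K ps = prod_list (map K ss)"
      "length ps = length ss"
      by blast
    have "ps @ [(N, M)] \<in> chains N M" using ps(1) ab by (intro snoc_in_chains) auto
    moreover have "chain_prob K (ps @ [(N, M)]) = prod_list (map K (ss @ [s]))"
      using chain_prob_snoc[OF ps(1), of K N M] ps(2) ab by simp
    ultimately show ?thesis using ps(3) by auto
  qed
qed simp

lemma slowly_varying_doubling:
  assumes "slowly_varying L"
  shows "\<exists>X::nat. X \<ge> 2 \<and> (\<forall>x\<ge>real X. L x > 0 \<and> L (2 * x) \<ge> L x / 2)"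
proof -
  have pos: "\<forall>\<^sub>F x in at_top. L x > 0" and lim: "((\<lambda>x. L (2 * x) / L x) \<longlongrightarrow> 1) at_top"
    using assms by (auto simp: slowly_varying_def)
  have "\<forall>\<^sub>F x in at_top. L (2 * x) / L x > 1 / 2"
    using lim by (rule order_tendstoD) simp
  with pos have "\<forall>\<^sub>F x in at_top. L x > 0 \<and> L (2 * x) \<ge> L x / 2"
    by eventually_elim (auto simp: field_simps)
  then obtain X0 where X0: "\<forall>x\<ge>X0. L x > 0 \<and> L (2 * x) \<ge> L x / 2"
    by (auto simp: eventually_at_top_linorder)
  have "real (max 2 (nat \<lceil>X0\<rceil>)) \<ge> X0" by linarith
  then show ?thesis
    using X0 by (intro exI[of _ "max 2 (nat \<lceil>X0\<rceil>)"]) auto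
qed

lemma doubling_power_bound:
  fixes L :: "real \<Rightarrow> real"
  assumes "\<forall>x\<ge>real X. L x > 0 \<and> L (2 * x) \<ge> L x / 2" "X \<ge> 1"
  shows "L (real (X * 2 ^ j)) \<ge> L (real X) / 2 ^ j"
proof (induction j)
  case (Suc j)
  have "X * 1 \<le> X * 2 ^ j" by (intro mult_le_mono2) simp
  then have "real X \<le> real (X * 2 ^ j)" by (simp only: of_nat_le_iff mult_1_right)
  then have "L (real (X * 2 ^ j)) / 2 \<le> L (real (X * 2 ^ Suc j))"
    using assms(1) by (auto simp: mult_ac)
  moreover have "L (real X) / 2 ^ Suc j \<le> L (real (X * 2 ^ j)) / 2"
    using Suc.IH by (simp add: divide_right_mono)
  ultimately show ?case by linarith
qed simp

lemma doubling_jumps: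
  fixes X n k :: nat
  assumes "X \<ge> 1" "X \<le> n" "n < 2 ^ k"
  shows "\<exists>ss. ss \<noteq> [] \<and> sum_list ss = n \<and> length ss \<le> k + 1 \<and>
              (\<forall>s\<in>set ss. s \<in> {X..<2 * X} \<or> (\<exists>j<k. s = X * 2 ^ j))"
proof -
  (* n = (X + n mod X) + X * q, with q written in binary. *)
  obtain q where q: "n div X = Suc q"
    using assms by (metis div_greater_zero_iff gr0_implies_Suc less_le_trans zero_less_one)
  have n_eq: "n = (X + n mod X) + X * q"
    using div_mult_mod_eq[of n X] by (simp add: q algebra_simps)
  have "q < 2 ^ k" using assms div_le_dividend[of n X] q by linarith
  then obtain js where js: "(\<Sum>j\<leftarrow>js. (2::nat) ^ j) = q" "length js \<le> k" "\<forall>j\<in>set js. j < k"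
    using binary_expansion by blast
  let ?ss = "(X + n mod X) # map (\<lambda>j. X * 2 ^ j) js"
  have "(\<Sum>j\<leftarrow>js. X * 2 ^ j) = X * q"
    unfolding js(1)[symmetric] by (induction js) (auto simp: algebra_simps)
  then have "sum_list ?ss = n" using n_eq by (simp add: o_def)
  moreover have "length ?ss \<le> k + 1" using js by simp
  moreover have "\<forall>s\<in>set ?ss. s \<in> {X..<2 * X} \<or> (\<exists>j<k. s = X * 2 ^ j)"
    using js assms by auto
  ultimately show ?thesis by blast
qed

lemma Kfun_doubling_jump_lower:
  fixes L :: "real \<Rightarrow> real" and X k n s :: nat
  defines "m0 \<equiv> Min (L ` real ` {X..<2 * X})"
  assumes \<alpha>: "\<alpha> \<ge> 0" and X: "X \<ge> 2" and LX: "\<forall>x\<ge>real X. L x > 0 \<and> L (2 * x) \<ge> L x / 2"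
    and s: "s \<in> {X..<2 * X} \<or> (\<exists>j<k. s = X * 2 ^ j)" "s \<le> n"
  shows "Kfun \<alpha> L s \<ge> m0 / 2 ^ k * real n powr (-(2 + \<alpha>))"
proof -
  have m0_le: "m0 \<le> L (real t)" if "t \<in> {X..<2 * X}" for t
    unfolding m0_def using that by (intro Min_le) auto
  have m0_pos: "m0 > 0" unfolding m0_def using X LX by (subst Min_gr_iff) auto
  have "m0 / 2 ^ k \<le> L (real s)"
    using s(1)
  proof
    assume "s \<in> {X..<2 * X}"
    moreover have "m0 / 2 ^ k \<le> m0 / 1" using m0_pos by (intro divide_left_mono) auto
    ultimately show ?thesis using m0_le[of s] by simp
  next
    assume "\<exists>j<k. s = X * 2 ^ j"
    then obtain j where j: "j < k" "s = X * 2 ^ j" by blast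
    have "m0 / 2 ^ k \<le> m0 / 2 ^ j" using m0_pos j by (intro divide_left_mono) auto
    also have "\<dots> \<le> L (real X) / 2 ^ j" using m0_le[of X] X by (intro divide_right_mono) auto
    also have "\<dots> \<le> L (real s)" using doubling_power_bound[OF LX, of j] X j by simp
    finally show ?thesis .
  qed
  moreover have "real n powr (-(2 + \<alpha>)) \<le> real s powr (-(2 + \<alpha>))"
    using s X \<alpha> by (intro powr_mono2') auto
  moreover have "0 \<le> m0 / 2 ^ k" using m0_pos by simp
  ultimately show ?thesis
    unfolding Kfun_def by (intro mult_mono) auto
qed

lemma exists_chain_few_jumps:
  fixes L :: "real \<Rightarrow> real" and X N M k :: nat
  defines "m0 \<equiv> Min (L ` real ` {X..<2 * X})"
  assumes "\<alpha> \<ge> 0" "X \<ge> 2" "\<forall>x\<ge>real X. L x > 0 \<and> L (2 * x) \<ge> L x / 2"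
    and "X \<le> N + M" "N + M < 2 ^ k" "k + 1 \<le> N" "k + 1 \<le> M"
  shows "\<exists>ps\<in>chains N M. length ps \<le> k + 1 \<and>
           chain_prob (Kfun \<alpha> L) ps \<ge> (m0 / 2 ^ k * real (N + M) powr (-(2 + \<alpha>))) ^ length ps"
proof -
  obtain ss where ss: "ss \<noteq> []" "sum_list ss = N + M" "length ss \<le> k + 1"
    and jumps: "\<forall>s\<in>set ss. s \<in> {X..<2 * X} \<or> (\<exists>j<k. s = X * 2 ^ j)"
    using doubling_jumps[of X "N + M" k] assms by auto
  have "s \<ge> 2" if "s \<in> set ss" for s
    using jumps that
  proof (elim ballE disjE exE conjE)
    fix j assume "s = X * 2 ^ j"
    moreover have "X * 1 \<le> X * 2 ^ j" by (intro mult_le_mono2) simp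
    ultimately show ?thesis using assms(3) by linarith
  qed (use assms(3) in auto)
  then obtain ps where ps: "ps \<in> chains N M" "chain_prob (Kfun \<alpha> L) ps = prod_list (map (Kfun \<alpha> L) ss)"
    "length ps = length ss"
    using chain_of_jumps[of ss N M "Kfun \<alpha> L"] ss assms by auto
  have "Kfun \<alpha> L s \<ge> m0 / 2 ^ k * real (N + M) powr (-(2 + \<alpha>))" if "s \<in> set ss" for s
    unfolding m0_def using assms jumps that member_le_sum_list[OF that] ss(2)
    by (intro Kfun_doubling_jump_lower) auto
  moreover have "m0 > 0" unfolding m0_def using assms by (subst Min_gr_iff) auto
  ultimately have "prod_list (map (Kfun \<alpha> L) ss) \<ge> (m0 / 2 ^ k * real (N + M) powr (-(2 + \<alpha>))) ^ length ss"
    by (intro prod_list_ge_power) auto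
  then show ?thesis using ps ss(3) by (intro bexI[of _ ps]) auto
qed

lemma ln_ge_of_power_bound:
  fixes c \<mu> h :: real and l k :: nat
  assumes "\<mu> > 0" "c \<ge> \<mu> ^ l" "l \<le> k + 1"
  shows "ln c + h * l \<ge> - ((k + 1) * (\<bar>ln \<mu>\<bar> + \<bar>h\<bar>))"
proof -
  have "ln c \<ge> l * ln \<mu>"
    using assms ln_mono[of "\<mu> ^ l" c] by (simp add: ln_realpow)
  moreover have "- (l * \<bar>ln \<mu>\<bar>) \<le> l * ln \<mu>" and "- (\<bar>h\<bar> * l) \<le> h * l"
    using mult_left_mono[of "- \<bar>ln \<mu>\<bar>" "ln \<mu>" "real l"] mult_right_mono[of "- \<bar>h\<bar>" h "real l"]
    by simp_all
  moreover have "l * \<bar>ln \<mu>\<bar> \<le> (k + 1) * \<bar>ln \<mu>\<bar>" and "\<bar>h\<bar> * l \<le> \<bar>h\<bar> * (k + 1)"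
    using assms(3) by (intro mult_right_mono mult_left_mono; simp)+
  ultimately show ?thesis by (simp add: algebra_simps)
qed

section \<open>Vanishing of the free energy\<close>

lemma ceiling_log2:
  fixes n :: nat
  defines "k \<equiv> nat \<lceil>log 2 (real n + 1)\<rceil>"
  shows "n < 2 ^ k" and "real k \<le> log 2 (real n + 1) + 1"
proof -
  have k: "real k = real_of_int \<lceil>log 2 (real n + 1)\<rceil>" by (simp add: k_def)
  then show "real k \<le> log 2 (real n + 1) + 1" by linarith
  have "real n + 1 = 2 powr log 2 (real n + 1)" by simp
  also have "\<dots> \<le> 2 powr real k" using k by (intro powr_mono) auto
  finally have "real (n + 1) \<le> real (2 ^ k)" by (simp add: powr_realpow)
  then show "n < 2 ^ k" by (simp only: of_nat_le_iff)
qed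

lemma abs_ln_jump_bound:
  fixes m0 \<alpha> :: real and k n :: nat
  assumes "m0 > 0" "\<alpha> \<ge> 0" "n \<ge> 1"
  shows "\<bar>ln (m0 / 2 ^ k * real n powr (-(2 + \<alpha>)))\<bar> \<le> \<bar>ln m0\<bar> + k * ln 2 + (2 + \<alpha>) * ln n"
proof -
  have "ln (m0 / 2 ^ k * real n powr (-(2 + \<alpha>))) = ln m0 - k * ln 2 - (2 + \<alpha>) * ln n"
    using assms by (simp add: ln_mult ln_div ln_powr ln_realpow algebra_simps)
  moreover have "k * ln 2 \<ge> 0" "(2 + \<alpha>) * ln n \<ge> 0" using assms by auto
  ultimately show ?thesis by linarith
qed

lemma tendsto_div_along_proportional:
  fixes f :: "nat \<Rightarrow> real" and M :: "nat \<Rightarrow> nat"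
  assumes f: "((\<lambda>n. f n / real n) \<longlongrightarrow> 0) sequentially"
    and M: "((\<lambda>N. real (M N) / real N) \<longlongrightarrow> \<gamma>) sequentially"
  shows "((\<lambda>N. f (N + M N) / real N) \<longlongrightarrow> 0) sequentially"
proof -
  have "filterlim (\<lambda>N. N + M N) sequentially sequentially"
    by (rule filterlim_at_top_mono[OF filterlim_ident]) simp
  then have "((\<lambda>N. f (N + M N) / real (N + M N)) \<longlongrightarrow> 0) sequentially"
    using f by (rule filterlim_compose[rotated])
  moreover have "((\<lambda>N. real (N + M N) / real N) \<longlongrightarrow> 1 + \<gamma>) sequentially"
  proof -
    have "((\<lambda>N. 1 + real (M N) / real N) \<longlongrightarrow> 1 + \<gamma>) sequentially"
      using M by (intro tendsto_add) simp_all
    moreover have "\<forall>\<^sub>F N in sequentially. 1 + real (M N) / real N = real (N + M N) / real N"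
      using eventually_gt_at_top[of 0] by eventually_elim (simp add: field_simps)
    ultimately show ?thesis by (rule Lim_transform_eventually)
  qed
  ultimately have "((\<lambda>N. f (N + M N) / real (N + M N) * (real (N + M N) / real N)) \<longlongrightarrow> 0 * (1 + \<gamma>)) sequentially"
    by (rule tendsto_mult)
  moreover have "\<forall>\<^sub>F N in sequentially. f (N + M N) / real (N + M N) * (real (N + M N) / real N) = f (N + M N) / real N"
  proof (rule eventually_mono[OF eventually_gt_at_top[of 0]])
    fix N :: nat assume "N > 0"
    then have "real (N + M N) \<noteq> 0" by simp
    then show "f (N + M N) / real (N + M N) * (real (N + M N) / real N) = f (N + M N) / real N" by simp
  qed
  ultimately show ?thesis by (simp add: Lim_transform_eventually)
qed

lemma eventually_log2_le_sides:
  fixes M :: "nat \<Rightarrow> nat"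
  assumes "\<gamma> > 0" and M: "((\<lambda>N. real (M N) / real N) \<longlongrightarrow> \<gamma>) sequentially"
  shows "\<forall>\<^sub>F N in sequentially. log 2 (real (N + M N) + 1) + 2 \<le> N \<and> log 2 (real (N + M N) + 1) + 2 \<le> M N"
proof -
  have "((\<lambda>n. (log 2 (real n + 1) + 2) / real n) \<longlongrightarrow> 0) sequentially" by real_asymp
  then have lim: "((\<lambda>N. (log 2 (real (N + M N) + 1) + 2) / real N) \<longlongrightarrow> 0) sequentially"
    using M by (rule tendsto_div_along_proportional)
  have "\<forall>\<^sub>F N in sequentially. (log 2 (real (N + M N) + 1) + 2) / real N < min 1 (\<gamma> / 2)"
    using lim assms(1) by (intro order_tendstoD) auto
  moreover have "\<forall>\<^sub>F N in sequentially. real (M N) / real N > \<gamma> / 2"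
    using M assms(1) by (intro order_tendstoD) auto
  ultimately show ?thesis using eventually_gt_at_top[of 0]
    by eventually_elim (auto simp: field_simps)
qed

lemma polylog_div_tendsto_zero:
  fixes a b :: real
  shows "((\<lambda>n::nat. (log 2 (real n + 1) + 2) * (a + (log 2 (real n + 1) + 1) * ln 2 + b * ln (real n)) / real n)
           \<longlongrightarrow> 0) sequentially"
  by real_asymp

context fractional_moment
begin

lemma expectation_ln_Zfield_ge_polylog:
  fixes \<alpha> l :: real and L :: "real \<Rightarrow> real" and X N M :: nat
  defines "m0 \<equiv> Min (L ` real ` {X..<2 * X})"
    and "l \<equiv> log 2 (real (N + M) + 1)"
  assumes centered: "expectation (\<omega> (1, 1)) = 0" and K: "K = Kfun \<alpha> L" and \<alpha>: "\<alpha> \<ge> 0"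
    and X: "X \<ge> 2" and LX: "\<forall>x\<ge>real X. L x > 0 \<and> L (2 * x) \<ge> L x / 2"
    and NM: "X \<le> N + M" "l + 2 \<le> N" "l + 2 \<le> M"
  shows "expectation (\<lambda>x. ln (Zfield (N, M) x))
           \<ge> - ((l + 2) * (\<bar>ln m0\<bar> + \<bar>h\<bar> + (l + 1) * ln 2 + (2 + \<alpha>) * ln (N + M)))"
proof -
  define k where "k = nat \<lceil>l\<rceil>"
  have k: "N + M < 2 ^ k" "real k \<le> l + 1"
    using ceiling_log2[of "N + M"] by (simp_all add: k_def l_def)
  then have "k + 1 \<le> N" "k + 1 \<le> M" using NM by linarith+
  define \<mu> where "\<mu> = m0 / 2 ^ k * real (N + M) powr (-(2 + \<alpha>))"
  obtain ps where ps: "ps \<in> chains N M" "length ps \<le> k + 1" "chain_prob K ps \<ge> \<mu> ^ length ps"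
    using exists_chain_few_jumps[of \<alpha> X L N M k] K \<alpha> X LX NM k \<open>k + 1 \<le> N\<close> \<open>k + 1 \<le> M\<close>
    by (auto simp: \<mu>_def m0_def)
  have m0: "m0 > 0" unfolding m0_def using X LX by (subst Min_gr_iff) auto
  have "N + M \<ge> 1" using NM X by simp
  then have "\<mu> > 0" using m0 by (simp add: \<mu>_def)
  then have "chain_prob K ps > 0" using ps(3) by (meson less_le_trans zero_less_power)
  have "(k + 1) * (\<bar>ln \<mu>\<bar> + \<bar>h\<bar>) \<le> (l + 2) * (\<bar>ln m0\<bar> + \<bar>h\<bar> + (l + 1) * ln 2 + (2 + \<alpha>) * ln (N + M))"
  proof (rule mult_mono)
    have "\<bar>ln \<mu>\<bar> \<le> \<bar>ln m0\<bar> + k * ln 2 + (2 + \<alpha>) * ln (N + M)"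
      unfolding \<mu>_def using abs_ln_jump_bound[OF m0 \<alpha> \<open>N + M \<ge> 1\<close>, of k] by simp
    moreover have "k * ln 2 \<le> (l + 1) * ln 2" using k(2) by (intro mult_right_mono) auto
    ultimately show "\<bar>ln \<mu>\<bar> + \<bar>h\<bar> \<le> \<bar>ln m0\<bar> + \<bar>h\<bar> + (l + 1) * ln 2 + (2 + \<alpha>) * ln (N + M)"
      by linarith
  qed (use k(2) in auto)
  moreover have "ln (chain_prob K ps) + h * length ps \<ge> - ((k + 1) * (\<bar>ln \<mu>\<bar> + \<bar>h\<bar>))"
    using ln_ge_of_power_bound[OF \<open>\<mu> > 0\<close> ps(3) ps(2)] by simp
  moreover have "expectation (\<lambda>x. ln (Zfield (N, M) x)) \<ge> min 0 (ln (chain_prob K ps) + h * length ps)"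
    using expectation_ln_Zfield_ge[OF centered _ \<open>chain_prob K ps > 0\<close>] ps(1) by simp
  moreover have "0 \<le> (k + 1) * (\<bar>ln \<mu>\<bar> + \<bar>h\<bar>)" by simp
  ultimately show ?thesis by linarith
qed

lemma free_energy_vanishes:
  fixes \<alpha> \<gamma> C :: real and L :: "real \<Rightarrow> real" and Mseq :: "nat \<Rightarrow> nat"
  assumes centered: "expectation (\<omega> (1, 1)) = 0" and K: "K = Kfun \<alpha> L" and \<alpha>: "\<alpha> \<ge> 0"
    and L: "slowly_varying L" and bounded: "\<And>p. frac_moment p \<le> C"
    and \<gamma>: "\<gamma> > 0" and Mseq: "((\<lambda>N. real (Mseq N) / real N) \<longlongrightarrow> \<gamma>) sequentially"
  shows "((\<lambda>N. expectation (\<lambda>x. ln (Zfield (N, Mseq N) x)) / real N) \<longlongrightarrow> 0) sequentially"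
proof -
  obtain X :: nat where X: "X \<ge> 2" and LX: "\<forall>x\<ge>real X. L x > 0 \<and> L (2 * x) \<ge> L x / 2"
    using slowly_varying_doubling[OF L] by blast
  define g where "g n = (log 2 (real n + 1) + 2) * (\<bar>ln (Min (L ` real ` {X..<2 * X}))\<bar> + \<bar>h\<bar>
                          + (log 2 (real n + 1) + 1) * ln 2 + (2 + \<alpha>) * ln (real n))" for n
  have lower: "\<forall>\<^sub>F N in sequentially. - g (N + Mseq N) / real N \<le> expectation (\<lambda>x. ln (Zfield (N, Mseq N) x)) / real N"
    using eventually_log2_le_sides[OF \<gamma> Mseq] eventually_ge_at_top[of X]
  proof eventually_elim
    case (elim N)
    then show ?case
      using expectation_ln_Zfield_ge_polylog[OF centered K \<alpha> X LX, of N "Mseq N"]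
      by (intro divide_right_mono) (auto simp: g_def)
  qed
  have upper: "\<forall>\<^sub>F N in sequentially. expectation (\<lambda>x. ln (Zfield (N, Mseq N) x)) / real N \<le> C / \<delta> / real N"
    using expectation_ln_Zfield_le[OF bounded] by (intro always_eventually allI divide_right_mono) auto
  have "((\<lambda>N. - g (N + Mseq N) / real N) \<longlongrightarrow> 0) sequentially"
    using tendsto_minus[OF tendsto_div_along_proportional[OF polylog_div_tendsto_zero Mseq]]
    by (simp add: g_def)
  moreover have "((\<lambda>N. C / \<delta> / real N) \<longlongrightarrow> 0) sequentially" by real_asymp
  ultimately show ?thesis using tendsto_sandwich[OF lower upper] by blast
qed

end

theorem proposition4p1:
  fixes \<alpha> \<beta> h \<delta> \<gamma> :: real
    and L :: "real \<Rightarrow> real"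
    and P :: "'a measure"
    and \<omega> :: "nat \<times> nat \<Rightarrow> 'a \<Rightarrow> real"
    and k :: nat
  defines "K \<equiv> Kfun \<alpha> L"
  defines "Z \<equiv> (\<lambda>N M x. Zpart K \<beta> h (\<lambda>p. \<omega> p x) N M)"
  defines "A \<equiv> (\<lambda>i j. if i = 0 \<and> j = 0 then 1
                      else if i = 0 \<or> j = 0 then 0
                      else prob_space.expectation P (\<lambda>x. Z i j x powr \<delta>))"
  defines "c \<equiv> prob_space.expectation P (\<lambda>x. exp (\<delta> * (\<beta> * \<omega> (1, 1) x + h)))"
  assumes alpha: "\<alpha> \<ge> 0"
    and L_sv: "slowly_varying L"
    and K_nonneg: "\<forall>n\<ge>2. K n \<ge> 0"
    and K_norm: "((\<lambda>(n, m). K (n + m)) has_sum 1) ({1..} \<times> {1..})"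
    and P: "prob_space P"
    and indep: "prob_space.indep_vars P (\<lambda>_. borel) \<omega> UNIV"
    and ident: "\<forall>p. distr P borel (\<omega> p) = distr P borel (\<omega> (1, 1))"
    and centered: "prob_space.expectation P (\<omega> (1, 1)) = 0"
    and unit_var: "prob_space.expectation P (\<lambda>x. (\<omega> (1, 1) x)\<^sup>2) = 1"
    and expmom: "\<forall>b::real. integrable P (\<lambda>x. exp (b * \<omega> (1, 1) x))"
    and delta: "0 < \<delta>" "\<delta> < 1"
    and gamma: "\<gamma> > 0"
    and k: "k \<ge> 1"
    and rho: "(\<Sum>\<^sub>\<infinity>(n, m)\<in>{k..} \<times> {k..}.
                 ennreal (c * (\<Sum>i<k. \<Sum>j<k. K (n - i + (m - j)) powr \<delta> * A i j)))
            + (\<Sum>\<^sub>\<infinity>(n, m)\<in>{1..k-1} \<times> {k..}.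
                 ennreal (c * (\<Sum>i<n. \<Sum>j<k. K (n - i + (m - j)) powr \<delta> * A i j)))
            + (\<Sum>\<^sub>\<infinity>(n, m)\<in>{k..} \<times> {1..k-1}.
                 ennreal (c * (\<Sum>i<k. \<Sum>j<m. K (n - i + (m - j)) powr \<delta> * A i j)))
            \<le> 1"
  shows "\<forall>Mseq :: nat \<Rightarrow> nat. ((\<lambda>N. real (Mseq N) / real N) \<longlongrightarrow> \<gamma>) sequentially \<longrightarrow>
           ((\<lambda>N. prob_space.expectation P (\<lambda>x. ln (Z N (Mseq N) x)) / real N) \<longlongrightarrow> 0) sequentially"
proof (intro allI impI)
  fix Mseq :: "nat \<Rightarrow> nat"
  assume Mseq: "((\<lambda>N. real (Mseq N) / real N) \<longlongrightarrow> \<gamma>) sequentially"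
  interpret fractional_moment P \<omega> K \<beta> h \<delta>
    using P indep ident K_nonneg delta expmom
    by (intro fractional_moment.intro iid_field.intro iid_field_axioms.intro
          fractional_moment_axioms.intro) auto
  have "A = (\<lambda>i j. frac_moment (i, j))" and "c = c_delta"
    by (simp_all add: A_def Z_def fun_eq_iff frac_moment_eq c_def c_delta_def)
  then have "frac_moment p \<le> max 0 (Max (frac_moment ` below (k, k)))" for p
    using frac_moment_bounded[OF k] rho by simp
  then have "((\<lambda>N. expectation (\<lambda>x. ln (Zfield (N, Mseq N) x)) / real N) \<longlongrightarrow> 0) sequentially"
    using centered alpha L_sv gamma Mseq by (intro free_energy_vanishes) (simp_all add: K_def)
  moreover have "\<forall>\<^sub>F N in sequentially. expectation (\<lambda>x. ln (Zfield (N, Mseq N) x)) / real N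
                   = expectation (\<lambda>x. ln (Z N (Mseq N) x)) / real N"
    using eventually_gt_at_top[of 0] by eventually_elim (simp add: Z_def Zfield_eq_Zpart)
  ultimately show "((\<lambda>N. expectation (\<lambda>x. ln (Z N (Mseq N) x)) / real N) \<longlongrightarrow> 0) sequentially"
    by (rule Lim_transform_eventually)
qed

end
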